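(* Fix $k$. For $j\ge1$ let $$\Delta_j(m)=(-1)^j\big[2^j\psi^{(j-1)}(2m+1)-\psi^{(j-1)}(m+1+k)-\psi^{(j-1)}(m+1-k)\big],$$ and define $x_0(m)=1$, $x_1(m)=0$, and $x_j(m)=\sum_{l=0}^{j-2}\binom{j-1}{l}\Delta_{j-l}(m)x_l(m)$ for $j\ge2$. Then for every $j\in\mathbb{N}$, $$\frac{d\Delta_j}{dm}=-\Delta_{j+1}\qquad\text{and}\qquad\frac{dx_j}{dm}=-x_{j+1}+j\,\Delta_2\,x_{j-1}.$$
   Context: $\psi^{(n)}(z)=\frac{d^{n+1}}{dz^{n+1}}\log\Gamma(z)$ is the polygamma function. The identities are for values of $m$ where none of $2m+1$, $m+1+k$, $m+1-k$ is a non-positive integer. *)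

theory Defs
  imports "HOL-Analysis.Analysis"
begin

definition Delta :: "complex \<Rightarrow> nat \<Rightarrow> complex \<Rightarrow> complex" where
  "Delta k j m = (-1) ^ j * (2 ^ j * Polygamma (j - 1) (2 * m + 1)
       - Polygamma (j - 1) (m + 1 + k) - Polygamma (j - 1) (m + 1 - k))"

fun xs :: "complex \<Rightarrow> nat \<Rightarrow> complex \<Rightarrow> complex" where
  "xs k 0 m = 1"
| "xs k (Suc 0) m = 0"
| "xs k (Suc (Suc n)) m =
     (\<Sum>l\<le>n. of_nat (Suc n choose l) * Delta k (Suc (Suc n) - l) m * xs k l m)"

end

theory Submission
  imports Defs
begin

text \<open>Since the derivative of \<open>Polygamma n\<close> is \<open>Polygamma (n+1)\<close>, the chain rule gives
  \<open>\<Delta>_j' = -\<Delta>_(j+1)\<close>; the inner factor 2 of \<open>\<psi>(2m+1)\<close> is absorbed into \<open>2^j\<close>.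
  The terms \<open>-\<Delta>_(j-l+1) x_l\<close> and \<open>-\<Delta>_(j-l) x_(l+1)\<close> recombine by Pascal's rule into
  \<open>-x_(j+1)\<close> minus its summand \<open>l = j-1\<close>, and the terms \<open>l \<Delta>_2 \<Delta>_(j-l) x_(l-1)\<close>
  collapse, via \<open>l C(j-1,l) = (j-1) C(j-2,l-1)\<close> and the recurrence for \<open>x_(j-1)\<close>,
  to \<open>(j-1) \<Delta>_2 x_(j-1)\<close>.\<close>

lemma has_field_derivative_Polygamma_affine:
  fixes a b m :: complex
  assumes "a * m + b \<notin> \<int>\<^sub>\<le>\<^sub>0"
  shows "((\<lambda>t. Polygamma n (a * t + b)) has_field_derivative
           a * Polygamma (Suc n) (a * m + b)) (at m)"
proof -
  have "((\<lambda>t. Polygamma n (a * t + b)) has_field_derivative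
          Polygamma (Suc n) (a * m + b) * a) (at m)"
    by (rule DERIV_chain2[where g="\<lambda>t. a * t + b",
          OF has_field_derivative_Polygamma[OF assms, of n UNIV, simplified]])
       (auto intro!: derivative_eq_intros)
  then show ?thesis
    by (simp add: mult.commute)
qed

lemma Delta_has_field_derivative:
  fixes k m :: complex
  assumes "2 * m + 1 \<notin> \<int>\<^sub>\<le>\<^sub>0" "m + 1 + k \<notin> \<int>\<^sub>\<le>\<^sub>0" "m + 1 - k \<notin> \<int>\<^sub>\<le>\<^sub>0"
      and "j \<ge> 1"
  shows "((\<lambda>t. Delta k j t) has_field_derivative (- Delta k (j + 1) m)) (at m)"
proof -
  obtain i where j: "j = Suc i"
    using \<open>j \<ge> 1\<close> by (cases j) auto
  have "((\<lambda>t. Polygamma i (t + 1 + k)) has_field_derivative Polygamma (Suc i) (m + 1 + k)) (at m)"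
    using has_field_derivative_Polygamma_affine[of 1 m "1 + k" i] assms(2) by (simp add: add.assoc)
  moreover have "((\<lambda>t. Polygamma i (t + 1 - k)) has_field_derivative Polygamma (Suc i) (m + 1 - k)) (at m)"
    using has_field_derivative_Polygamma_affine[of 1 m "1 - k" i] assms(3) by (simp add: add_diff_eq)
  moreover have "((\<lambda>t. Polygamma i (2 * t + 1)) has_field_derivative
          2 * Polygamma (Suc i) (2 * m + 1)) (at m)"
    using assms(1) by (rule has_field_derivative_Polygamma_affine)
  ultimately have "((\<lambda>t. (-1) ^ j * (2 ^ j * Polygamma i (2 * t + 1)
         - Polygamma i (t + 1 + k) - Polygamma i (t + 1 - k))) has_field_derivative
         (-1) ^ j * (2 ^ j * (2 * Polygamma (Suc i) (2 * m + 1))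
         - Polygamma (Suc i) (m + 1 + k) - Polygamma (Suc i) (m + 1 - k))) (at m)"
    by (intro DERIV_cmult DERIV_diff)
  then show ?thesis
    unfolding Delta_def j by (simp add: algebra_simps)
qed

lemma sum_choose_Suc_Suc_split:
  fixes f :: "nat \<Rightarrow> 'a :: comm_semiring_1"
  shows "(\<Sum>l\<le>Suc n. of_nat (Suc (Suc n) choose l) * f l)
       = (\<Sum>l\<le>n. of_nat (Suc n choose l) * f l) + f (Suc n)
         + (\<Sum>l\<le>n. of_nat (Suc n choose l) * f (Suc l))"
proof -
  have "(\<Sum>l\<le>Suc n. of_nat (Suc (Suc n) choose l) * f l)
      = f 0 + (\<Sum>l\<le>n. of_nat (Suc n choose Suc l) * f (Suc l))
        + (\<Sum>l\<le>n. of_nat (Suc n choose l) * f (Suc l))"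
    by (subst sum.atMost_Suc_shift) (simp add: sum.distrib algebra_simps)
  also have "f 0 + (\<Sum>l\<le>n. of_nat (Suc n choose Suc l) * f (Suc l))
           = (\<Sum>l\<le>Suc n. of_nat (Suc n choose l) * f l)"
    unfolding sum.atMost_Suc_shift by simp
  finally show ?thesis
    by simp
qed

context
  fixes D X :: "nat \<Rightarrow> complex"
  assumes X_1: "X 1 = 0"
      and X_rec: "\<And>n. X (Suc (Suc n)) = (\<Sum>l\<le>n. of_nat (Suc n choose l) * D (Suc (Suc n) - l) * X l)"
begin

lemma recurrence_weighted_sum:
  "(\<Sum>l\<le>n. of_nat (Suc n choose l) * of_nat l * D (Suc (Suc n) - l) * X (l - 1))
     = of_nat (Suc n) * X (Suc n)"
proof (cases n)
  case 0
  then show ?thesis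
    using X_1 by simp
next
  case (Suc p)
  have "(\<Sum>l\<le>n. of_nat (Suc n choose l) * of_nat l * D (Suc (Suc n) - l) * X (l - 1))
      = (\<Sum>l\<le>p. of_nat (Suc n choose Suc l) * of_nat (Suc l) * D (Suc (Suc n) - Suc l) * X l)"
    unfolding Suc by (subst sum.atMost_Suc_shift) simp
  also have "\<dots> = (\<Sum>l\<le>p. of_nat (Suc n) * (of_nat (Suc p choose l) * D (Suc (Suc p) - l) * X l))"
  proof (rule sum.cong[OF refl])
    fix l
    have "(of_nat (Suc n choose Suc l) * of_nat (Suc l) :: complex) = of_nat (Suc n) * of_nat (n choose l)"
      using Suc_times_binomial_eq[of n l] by (metis mult.commute of_nat_mult)
    then show "of_nat (Suc n choose Suc l) * of_nat (Suc l) * D (Suc (Suc n) - Suc l) * X l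
        = of_nat (Suc n) * (of_nat (Suc p choose l) * D (Suc (Suc p) - l) * X l)"
      unfolding Suc by (simp del: binomial_Suc_Suc of_nat_Suc add: mult.assoc[symmetric])
  qed
  also have "\<dots> = of_nat (Suc n) * X (Suc n)"
    unfolding Suc by (simp add: X_rec sum_distrib_left)
  finally show ?thesis .
qed

lemma recurrence_derivative_identity:
  "(\<Sum>l\<le>n. of_nat (Suc n choose l) * (- D (Suc (Suc n) - l + 1) * X l
      + D (Suc (Suc n) - l) * (- X (l + 1) + of_nat l * D 2 * X (l - 1))))
   = - X (Suc (Suc (Suc n))) + of_nat (Suc (Suc n)) * D 2 * X (Suc n)"
proof -
  let ?S = "\<lambda>f. \<Sum>l\<le>n. of_nat (Suc n choose l) * f l"
  have "X (Suc (Suc (Suc n))) = (\<Sum>l\<le>Suc n. of_nat (Suc (Suc n) choose l) * (D (Suc (Suc (Suc n)) - l) * X l))"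
    using X_rec[of "Suc n"] by (simp add: mult.assoc)
  also have "\<dots> = ?S (\<lambda>l. D (Suc (Suc (Suc n)) - l) * X l) + D 2 * X (Suc n)
                  + ?S (\<lambda>l. D (Suc (Suc n) - l) * X (Suc l))"
    by (subst sum_choose_Suc_Suc_split) (simp add: numeral_2_eq_2)
  finally have X_next: "X (Suc (Suc (Suc n))) = \<dots>" .
  have "?S (\<lambda>l. - D (Suc (Suc n) - l + 1) * X l
          + D (Suc (Suc n) - l) * (- X (l + 1) + of_nat l * D 2 * X (l - 1)))
      = - ?S (\<lambda>l. D (Suc (Suc (Suc n)) - l) * X l) - ?S (\<lambda>l. D (Suc (Suc n) - l) * X (Suc l))
        + D 2 * (\<Sum>l\<le>n. of_nat (Suc n choose l) * of_nat l * D (Suc (Suc n) - l) * X (l - 1))"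
    by (simp add: sum.distrib sum_subtractf sum_distrib_left algebra_simps Suc_diff_le flip: sum_negf)
  also have "\<dots> = - X (Suc (Suc (Suc n))) + of_nat (Suc (Suc n)) * D 2 * X (Suc n)"
    unfolding recurrence_weighted_sum X_next by (simp add: algebra_simps)
  finally show ?thesis .
qed

end

lemma xs_has_field_derivative:
  fixes k m :: complex
  assumes "2 * m + 1 \<notin> \<int>\<^sub>\<le>\<^sub>0" "m + 1 + k \<notin> \<int>\<^sub>\<le>\<^sub>0" "m + 1 - k \<notin> \<int>\<^sub>\<le>\<^sub>0"
  shows "((\<lambda>t. xs k j t) has_field_derivative
           (- xs k (j + 1) m + of_nat j * Delta k 2 m * xs k (j - 1) m)) (at m)"
proof (induction j rule: less_induct)
  case (less j)
  consider "j = 0" | "j = 1" | n where "j = Suc (Suc n)"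
    by (metis One_nat_def not0_implies_Suc)
  then show ?case
  proof cases
    case 1
    then show ?thesis by simp
  next
    case 2
    then show ?thesis by (simp add: numeral_2_eq_2)
  next
    case 3
    have "((\<lambda>t. \<Sum>l\<le>n. of_nat (Suc n choose l) * Delta k (Suc (Suc n) - l) t * xs k l t)
        has_field_derivative
        (\<Sum>l\<le>n. of_nat (Suc n choose l) * (- Delta k (Suc (Suc n) - l + 1) m * xs k l m
           + Delta k (Suc (Suc n) - l) m * (- xs k (l + 1) m
               + of_nat l * Delta k 2 m * xs k (l - 1) m)))) (at m)"
    proof (intro DERIV_sum)
      fix l assume "l \<in> {..n}"
      then have "((\<lambda>t. Delta k (Suc (Suc n) - l) t) has_field_derivative
                  - Delta k (Suc (Suc n) - l + 1) m) (at m)"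
            and "((\<lambda>t. xs k l t) has_field_derivative
                  - xs k (l + 1) m + of_nat l * Delta k 2 m * xs k (l - 1) m) (at m)"
        using Delta_has_field_derivative[OF assms] less[of l] 3 by auto
      from DERIV_cmult[OF DERIV_mult'[OF this], of "of_nat (Suc n choose l)"]
      show "((\<lambda>t. of_nat (Suc n choose l) * Delta k (Suc (Suc n) - l) t * xs k l t)
          has_field_derivative
          of_nat (Suc n choose l) * (- Delta k (Suc (Suc n) - l + 1) m * xs k l m
           + Delta k (Suc (Suc n) - l) m * (- xs k (l + 1) m
               + of_nat l * Delta k 2 m * xs k (l - 1) m))) (at m)"
        by (simp add: algebra_simps)
    qed
    then show ?thesis
      using 3 recurrence_derivative_identity[of "\<lambda>i. xs k i m" "\<lambda>i. Delta k i m" n]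
      by simp
  qed
qed

theorem lemma1:
  fixes k m :: complex
  assumes "2 * m + 1 \<notin> \<int>\<^sub>\<le>\<^sub>0"
      and "m + 1 + k \<notin> \<int>\<^sub>\<le>\<^sub>0"
      and "m + 1 - k \<notin> \<int>\<^sub>\<le>\<^sub>0"
  shows "(\<forall>j\<ge>1. ((\<lambda>t. Delta k j t) has_field_derivative (- Delta k (j + 1) m)) (at m))
       \<and> (\<forall>j. ((\<lambda>t. xs k j t) has_field_derivative
               (- xs k (j + 1) m + of_nat j * Delta k 2 m * xs k (j - 1) m)) (at m))"
  using Delta_has_field_derivative[OF assms] xs_has_field_derivative[OF assms] by blast

end
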